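(* There is a constant $\varepsilon_0\in(0,1)$ such that for every constant $\varepsilon\in(0,\varepsilon_0)$ the following holds. Consider the NSGA-II with population size $N=n+1$ optimizing \textsc{OneMinMax}, where the offspring population is generated by applying one-bit mutation once to each individual of $P_t$. If $|f(P_t)|\le(1-\varepsilon)(n+1)$, then, conditional on $P_t$, with probability at least $1-\exp(-\Omega(n))$ (the implicit constant depending only on $\varepsilon$, and $n$ sufficiently large), $$|f(R_t)|\le\left(1-\tfrac{1}{10}\varepsilon\left(\tfrac15\varepsilon-\tfrac2n\right)^{5/\varepsilon}\right)(n+1).$$
   Context: Search space $\{0,1\}^n$; objective $f=(f_1,f_2)$, both maximized. Populations are multisets of bit strings; for a population $P$, $f(P)=\{f(x):x\in P\}$. In iteration $t$ of the NSGA-II, $P_t$ is the parent population of size $N$, $Q_t$ the offspring population of size $N$ (here: one offspring of each individual of $P_t$, created independently by one-bit mutation, which flips exactly one uniformly random bit), and $R_t=P_t\cup Q_t$ (multiset union). \textsc{OneMinMax}: $f(x)=(n-\sum_{i=1}^n x_i,\ \sum_{i=1}^n x_i)$; its Pareto front is $\{(k,n-k):k\in\{0,\dots,n\}\}$, of size $n+1$. *)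

theory Defs
  imports "HOL-Probability.Probability"
begin

text \<open>Bit strings of length n are lists of booleans of length n.
  A population is a list of individuals (the multiset is mset of the list).\<close>

definition ones :: "bool list \<Rightarrow> nat" where
  "ones x = length (filter id x)"

definition OneMinMax :: "nat \<Rightarrow> bool list \<Rightarrow> nat \<times> nat" where
  "OneMinMax n x = (n - ones x, ones x)"

definition num_fvals :: "nat \<Rightarrow> bool list list \<Rightarrow> nat" where
  "num_fvals n P = card (OneMinMax n ` set P)"

definition one_bit_mutation :: "bool list \<Rightarrow> bool list pmf" where
  "one_bit_mutation x =
     map_pmf (\<lambda>i. x[i := \<not> x ! i]) (pmf_of_set {0..<length x})"

fun offspring :: "bool list list \<Rightarrow> bool list list pmf" where
  "offspring [] = return_pmf []"
| "offspring (x # xs) =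
     bind_pmf (one_bit_mutation x) (\<lambda>y.
     bind_pmf (offspring xs) (\<lambda>ys. return_pmf (y # ys)))"

end

theory Submission
  imports Defs
begin

(* Levels are numbers of ones.  At least eps (n + 1) levels are missing from P, and a mutant of x
   has level ones x + 1 or ones x - 1, so a level k can only be produced by parents at the adjacent
   levels; unless k is close to 0 or n, each of them misses k with probability at least
   b = eps/5 - 2/n.  Discarding the levels near the ends and those with more than T = ceil (4/eps)
   adjacent parents (there are few, since every parent is adjacent to at most two levels) leaves a set
   K of at least eps (n + 1)/10 missing levels, each missed by all offspring with probability at
   least b^T.  A single mutant hits at most one level, so the misses of different levels are
   negatively correlated: E [prod_k (1 - w [k missed])] <= prod_k (1 - w Pr [k missed]).
   With w = 1 - 1/e this bounds E [exp (- #missed)], and Chernoff's method shows that at least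
   eps/10 b^(5/eps) (n + 1) levels of K remain missing in P @ Q, except with probability exp (- Omega (n)). *)

section \<open>Levels of bit strings\<close>

lemma ones_eq_card: "ones x = card {i. i < length x \<and> x ! i}"
  unfolding ones_def by (simp add: length_filter_conv_card)

lemma ones_le_length: "ones x \<le> length x"
  unfolding ones_def by simp

lemma ones_flip_bit:
  assumes "i < length x"
  shows "ones (x[i := \<not> x ! i]) = (if x ! i then ones x - 1 else ones x + 1)"
proof -
  let ?S = "{j. j < length x \<and> x ! j}"
  have "{j. j < length (x[i := \<not> x ! i]) \<and> x[i := \<not> x ! i] ! j} =
        (if x ! i then ?S - {i} else insert i ?S)"
    using assms by (auto simp: nth_list_update)
  then show ?thesis
    using assms by (auto simp: ones_eq_card card_insert_if)
qed

lemma ones_pos: "i < length x \<Longrightarrow> x ! i \<Longrightarrow> 0 < ones x"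
  unfolding ones_eq_card by (auto simp: card_gt_0_iff)

lemma num_fvals_eq_card_ones: "num_fvals n P = card (ones ` set P)"
proof -
  have "OneMinMax n ` set P = (\<lambda>m. (n - m, m)) ` ones ` set P"
    by (auto simp: OneMinMax_def)
  moreover have "inj_on (\<lambda>m::nat. (n - m, m)) A" for A
    by (auto simp: inj_on_def)
  ultimately show ?thesis
    unfolding num_fvals_def by (simp add: card_image)
qed

(* The hypothesis 0 < n matters: one_bit_mutation [] is pmf_of_set {}, which is unspecified. *)
lemma length_offspring:
  assumes "Q \<in> set_pmf (offspring P)" "\<forall>x\<in>set P. length x = n" "0 < n"
  shows "\<forall>y\<in>set Q. length y = n"
  using assms
  by (induction P arbitrary: Q) (auto simp: one_bit_mutation_def set_pmf_of_set)

section \<open>Chernoff bound for the number of missed levels\<close>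

lemma expectation_bind_pmf:
  fixes f :: "'b \<Rightarrow> real"
  assumes "\<And>y. \<bar>f y\<bar> \<le> B"
  shows "measure_pmf.expectation (bind_pmf M N) f =
         measure_pmf.expectation M (\<lambda>x. measure_pmf.expectation (N x) f)"
  unfolding measure_pmf_bind
  by (rule integral_bind[where K="count_space UNIV" and B=B and B'=1])
     (use assms in \<open>auto simp: measure_pmf.prob_space measure_pmf_in_subprob_algebra\<close>)

lemma expectation_unit_interval:
  fixes D :: "'a pmf" and f :: "'a \<Rightarrow> real"
  assumes "\<And>y. 0 \<le> f y" "\<And>y. f y \<le> 1"
  shows "integrable D f" "0 \<le> measure_pmf.expectation D f" "measure_pmf.expectation D f \<le> 1"
proof -
  show "integrable D f"
    by (rule measure_pmf.integrable_const_bound[where B=1]) (use assms in auto)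
  then show "0 \<le> measure_pmf.expectation D f" "measure_pmf.expectation D f \<le> 1"
    using assms by (auto intro: measure_pmf.integral_ge_const measure_pmf.integral_le_const)
qed

lemma expectation_prod_ne_le:
  fixes D :: "'a pmf" and g :: "'a \<Rightarrow> 'b" and c :: "'b \<Rightarrow> real"
  assumes "finite K" "\<And>k. 0 \<le> c k" "\<And>k. c k \<le> 1"
  shows "measure_pmf.expectation D (\<lambda>y. \<Prod>k\<in>K. 1 - c k * of_bool (g y \<noteq> k))
         \<le> (\<Prod>k\<in>K. 1 - c k * measure_pmf.prob D {y. g y \<noteq> k})"
  using assms(1)
proof (induction K rule: finite_induct)
  case empty
  then show ?case by simp
next
  case (insert k0 K)
  define F where "F y = (\<Prod>k\<in>K. 1 - c k * of_bool (g y \<noteq> k))" for y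
  define R where "R = (\<Prod>k\<in>K. 1 - c k * measure_pmf.prob D {y. g y \<noteq> k})"
  define C where "C = (\<Prod>k\<in>K. 1 - c k)"
  define p where "p = measure_pmf.prob D {y. g y = k0}"
  have "0 \<le> F y" "F y \<le> 1" for y
    unfolding F_def using assms(2,3) by (auto intro!: prod_nonneg prod_le_1)
  then have "integrable D F"
    by (rule expectation_unit_interval)
  \<comment> \<open>If g y = k0, every factor of F y is 1 - c k, so F y = C.\<close>
  have split: "(\<Prod>k\<in>insert k0 K. 1 - c k * of_bool (g y \<noteq> k))
      = (1 - c k0) * F y + c k0 * C * indicator {y. g y = k0} y" for y
  proof (cases "g y = k0")
    case True
    then have "F y = C"
      unfolding F_def C_def using insert.hyps(2) by (intro prod.cong) auto
    with True insert.hyps show ?thesis by (simp add: F_def algebra_simps)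
  qed (use insert.hyps in \<open>simp add: F_def\<close>)
  have "measure_pmf.expectation D (\<lambda>y. \<Prod>k\<in>insert k0 K. 1 - c k * of_bool (g y \<noteq> k))
      = measure_pmf.expectation D (\<lambda>y. (1 - c k0) * F y + c k0 * C * indicator {y. g y = k0} y)"
    by (simp only: split)
  also have "\<dots> = (1 - c k0) * measure_pmf.expectation D F + c k0 * C * p"
    using \<open>integrable D F\<close>
    by (subst Bochner_Integration.integral_add)
       (auto simp: p_def intro: measure_pmf.integrable_const_bound[where B=1])
  also have "\<dots> \<le> (1 - c k0) * R + c k0 * R * p"
  proof (intro add_mono mult_left_mono mult_right_mono)
    show "measure_pmf.expectation D F \<le> R"
      using insert.IH unfolding F_def R_def .
    show "C \<le> R"
      unfolding C_def R_def using assms(2,3)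
      by (intro prod_mono) (auto simp: mult_le_cancel_left1 intro!: mult_left_le)
  qed (use assms(2,3) in \<open>auto simp: p_def\<close>)
  also have "\<dots> = (1 - c k0 * (1 - p)) * R"
    by (simp add: algebra_simps)
  also have "1 - p = measure_pmf.prob D {y. g y \<noteq> k0}"
    using measure_pmf.prob_compl[of "{y. g y = k0}" D]
    by (simp add: p_def Compl_eq_Diff_UNIV[symmetric] Collect_neg_eq[symmetric])
  finally show ?case
    using insert.hyps by (simp add: R_def)
qed

definition miss_prob :: "bool list \<Rightarrow> nat \<Rightarrow> real" where
  "miss_prob x k = measure_pmf.prob (one_bit_mutation x) {y. ones y \<noteq> k}"

definition pop_miss_prob :: "bool list list \<Rightarrow> nat \<Rightarrow> real" where
  "pop_miss_prob P k = (\<Prod>x\<leftarrow>P. miss_prob x k)"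

lemma pop_miss_prob_bounds: "0 \<le> pop_miss_prob P k" "pop_miss_prob P k \<le> 1"
  unfolding pop_miss_prob_def miss_prob_def
  by (induction P) (auto intro: mult_le_one)

lemma expectation_offspring_prod_le:
  assumes "finite K" "\<And>k. 0 \<le> w k" "\<And>k. w k \<le> 1"
  shows "measure_pmf.expectation (offspring P) (\<lambda>Q. \<Prod>k\<in>K. 1 - w k * of_bool (k \<notin> ones ` set Q))
         \<le> (\<Prod>k\<in>K. 1 - w k * pop_miss_prob P k)"
  using assms(2,3)
proof (induction P arbitrary: w)
  case Nil
  then show ?case by (simp add: pop_miss_prob_def)
next
  case (Cons x P)
  define f where "f Q = (\<Prod>k\<in>K. 1 - w k * of_bool (k \<notin> ones ` set Q))" for Q
  have f_bounds: "0 \<le> f Q" "f Q \<le> 1" for Q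
    unfolding f_def using Cons.prems by (auto intro!: prod_nonneg prod_le_1)
  define E where "E y = measure_pmf.expectation (offspring P) (\<lambda>Q. f (y # Q))" for y
  have E_bounds: "0 \<le> E y" "E y \<le> 1" for y
    unfolding E_def by (rule expectation_unit_interval; use f_bounds in simp)+
  \<comment> \<open>Given the first offspring y, the other offspring face the weights w k * [ones y \<noteq> k].\<close>
  define v where "v y k = w k * of_bool (ones y \<noteq> k)" for y k
  have E_le: "E y \<le> (\<Prod>k\<in>K. 1 - (w k * pop_miss_prob P k) * of_bool (ones y \<noteq> k))" for y
  proof -
    have "f (y # Q) = (\<Prod>k\<in>K. 1 - v y k * of_bool (k \<notin> ones ` set Q))" for Q
      unfolding f_def v_def by (intro prod.cong) auto
    then have "E y \<le> (\<Prod>k\<in>K. 1 - v y k * pop_miss_prob P k)"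
      unfolding E_def using Cons.IH[of "v y"] Cons.prems by (simp add: v_def)
    then show ?thesis
      by (simp add: v_def mult_ac)
  qed
  have "measure_pmf.expectation (offspring (x # P)) f = measure_pmf.expectation (one_bit_mutation x) E"
    using f_bounds unfolding E_def by (simp add: expectation_bind_pmf[where B=1])
  also have "\<dots> \<le> measure_pmf.expectation (one_bit_mutation x)
          (\<lambda>y. \<Prod>k\<in>K. 1 - (w k * pop_miss_prob P k) * of_bool (ones y \<noteq> k))"
    using E_bounds E_le Cons.prems pop_miss_prob_bounds[of P]
    by (intro integral_mono expectation_unit_interval) (auto intro!: prod_nonneg prod_le_1 mult_le_one)
  also have "\<dots> \<le> (\<Prod>k\<in>K. 1 - (w k * pop_miss_prob P k) * miss_prob x k)"
    unfolding miss_prob_def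
    by (rule expectation_prod_ne_le)
       (use assms(1) Cons.prems pop_miss_prob_bounds[of P] in \<open>auto intro: mult_le_one\<close>)
  finally show ?case
    by (simp add: f_def[abs_def] pop_miss_prob_def algebra_simps)
qed

lemma expectation_exp_neg_missed_le:
  assumes "finite K" "\<And>k. k \<in> K \<Longrightarrow> B \<le> pop_miss_prob P k"
  shows "measure_pmf.expectation (offspring P) (\<lambda>Q. exp (- real (card {k\<in>K. k \<notin> ones ` set Q})))
         \<le> exp (- (real (card K) * B / 2))"
proof -
  define w :: real where "w = 1 - exp (-1)"
  have "1 + 1 \<le> exp (1::real)"
    by (rule exp_ge_add_one_self)
  then have w: "1/2 \<le> w" "w \<le> 1"
    by (auto simp: w_def exp_minus field_simps)
  have exp_eq: "exp (- real (card {k\<in>K. k \<notin> ones ` set Q}))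
      = (\<Prod>k\<in>K. 1 - w * of_bool (k \<notin> ones ` set Q))" for Q
  proof -
    have "(\<Prod>k\<in>K. 1 - w * of_bool (k \<notin> ones ` set Q))
        = (\<Prod>k\<in>K. if k \<notin> ones ` set Q then exp (-1) else 1)"
      by (intro prod.cong) (auto simp: w_def)
    also have "\<dots> = exp (- real (card {k\<in>K. k \<notin> ones ` set Q}))"
      using assms(1) by (simp add: prod.If_cases Int_def exp_of_nat_mult[symmetric])
    finally show ?thesis ..
  qed
  have "measure_pmf.expectation (offspring P) (\<lambda>Q. exp (- real (card {k\<in>K. k \<notin> ones ` set Q})))
      \<le> (\<Prod>k\<in>K. 1 - w * pop_miss_prob P k)"
    unfolding exp_eq using assms(1) w by (intro expectation_offspring_prod_le) auto
  also have "\<dots> \<le> (\<Prod>k\<in>K. exp (- (w * pop_miss_prob P k)))"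
  proof (rule prod_mono)
    fix k
    have "w * pop_miss_prob P k \<le> 1"
      using w pop_miss_prob_bounds[of P k] by (intro mult_le_one) auto
    then show "0 \<le> 1 - w * pop_miss_prob P k \<and> 1 - w * pop_miss_prob P k \<le> exp (- (w * pop_miss_prob P k))"
      using exp_ge_add_one_self[of "- (w * pop_miss_prob P k)"] by simp
  qed
  also have "\<dots> = exp (- (w * (\<Sum>k\<in>K. pop_miss_prob P k)))"
    using assms(1) by (simp add: sum_distrib_left exp_sum flip: sum_negf)
  also have "\<dots> \<le> exp (- (real (card K) * B / 2))"
  proof -
    have "real (card K) * B \<le> (\<Sum>k\<in>K. pop_miss_prob P k)"
      using sum_mono[of K "\<lambda>_. B", OF assms(2)] by simp
    moreover have "0 \<le> (\<Sum>k\<in>K. pop_miss_prob P k)"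
      using pop_miss_prob_bounds by (simp add: sum_nonneg)
    ultimately have "real (card K) * B / 2 \<le> w * (\<Sum>k\<in>K. pop_miss_prob P k)"
      using w mult_right_mono[OF w(1), of "\<Sum>k\<in>K. pop_miss_prob P k"] by linarith
    then show ?thesis
      by simp
  qed
  finally show ?thesis .
qed

lemma measure_pmf_Chernoff_le:
  fixes X :: "'a \<Rightarrow> real"
  assumes "\<And>y. 0 \<le> X y"
  shows "measure_pmf.prob D {y. X y \<le> t} \<le> exp t * measure_pmf.expectation D (\<lambda>y. exp (- X y))"
proof -
  have "{y. X y \<le> t} = {y \<in> space D. exp (- t) \<le> exp (- X y)}"
    by auto
  moreover have "measure_pmf.prob D {y \<in> space D. exp (- t) \<le> exp (- X y)}
      \<le> measure_pmf.expectation D (\<lambda>y. exp (- X y)) / exp (- t)"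
    using assms by (intro integral_Markov_inequality_measure[where A=UNIV] expectation_unit_interval) auto
  ultimately have "measure_pmf.prob D {y. X y \<le> t} \<le> measure_pmf.expectation D (\<lambda>y. exp (- X y)) / exp (- t)"
    by simp
  then show ?thesis
    by (simp add: exp_minus divide_inverse mult.commute)
qed

lemma prob_offspring_few_missed_le:
  assumes "finite K" "\<And>k. k \<in> K \<Longrightarrow> B \<le> pop_miss_prob P k"
  shows "measure_pmf.prob (offspring P) {Q. real (card {k\<in>K. k \<notin> ones ` set Q}) \<le> t}
         \<le> exp (t - real (card K) * B / 2)"
proof -
  have "measure_pmf.prob (offspring P) {Q. real (card {k\<in>K. k \<notin> ones ` set Q}) \<le> t}
      \<le> exp t * measure_pmf.expectation (offspring P) (\<lambda>Q. exp (- real (card {k\<in>K. k \<notin> ones ` set Q})))"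
    by (rule measure_pmf_Chernoff_le) simp
  also have "\<dots> \<le> exp t * exp (- (real (card K) * B / 2))"
    using assms by (intro mult_left_mono expectation_exp_neg_missed_le) auto
  finally show ?thesis
    by (simp flip: exp_add)
qed

section \<open>Levels adjacent to a parent\<close>

definition adjacent_level :: "bool list \<Rightarrow> nat \<Rightarrow> bool" where
  "adjacent_level x k \<longleftrightarrow> ones x + 1 = k \<or> ones x = k + 1"

definition num_neighbours :: "bool list list \<Rightarrow> nat \<Rightarrow> nat" where
  "num_neighbours P k = length (filter (\<lambda>x. adjacent_level x k) P)"

lemma miss_prob_eq_card:
  assumes "x \<noteq> []"
  shows "miss_prob x k = card {i. i < length x \<and> ones (x[i := \<not> x ! i]) \<noteq> k} / length x"
proof -
  have "{0..<length x} \<inter> (\<lambda>i. x[i := \<not> x ! i]) -` {y. ones y \<noteq> k}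
      = {i. i < length x \<and> ones (x[i := \<not> x ! i]) \<noteq> k}"
    by auto
  then show ?thesis
    using assms by (simp add: miss_prob_def one_bit_mutation_def measure_pmf_of_set)
qed

lemma miss_prob_non_adjacent:
  assumes "x \<noteq> []" "\<not> adjacent_level x k"
  shows "miss_prob x k = 1"
proof -
  have "ones (x[i := \<not> x ! i]) \<noteq> k" if "i < length x" for i
    unfolding ones_flip_bit[OF that] using assms(2) ones_pos[OF that]
    by (auto simp: adjacent_level_def)
  then have "{i. i < length x \<and> ones (x[i := \<not> x ! i]) \<noteq> k} = {..<length x}"
    by auto
  then show ?thesis
    using assms(1) by (simp add: miss_prob_eq_card)
qed

lemma miss_prob_from_below:
  assumes "x \<noteq> []" "ones x + 1 = k"
  shows "miss_prob x k = ones x / length x"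
proof -
  have "ones (x[i := \<not> x ! i]) \<noteq> k \<longleftrightarrow> x ! i" if "i < length x" for i
    unfolding ones_flip_bit[OF that] using assms(2) by auto
  then have "{i. i < length x \<and> ones (x[i := \<not> x ! i]) \<noteq> k} = {i. i < length x \<and> x ! i}"
    by auto
  then show ?thesis
    by (simp add: miss_prob_eq_card[OF assms(1)] ones_eq_card)
qed

lemma miss_prob_from_above:
  assumes "x \<noteq> []" "ones x = k + 1"
  shows "miss_prob x k = (length x - ones x) / length x"
proof -
  have "ones (x[i := \<not> x ! i]) \<noteq> k \<longleftrightarrow> \<not> x ! i" if "i < length x" for i
    unfolding ones_flip_bit[OF that] using assms(2) by simp
  then have "{i. i < length x \<and> ones (x[i := \<not> x ! i]) \<noteq> k}
      = {..<length x} - {i. i < length x \<and> x ! i}"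
    by auto
  moreover have "card ({..<length x} - {i. i < length x \<and> x ! i}) = length x - ones x"
    unfolding ones_eq_card by (subst card_Diff_subset) auto
  ultimately show ?thesis
    by (simp add: miss_prob_eq_card[OF assms(1)])
qed

lemma miss_prob_adjacent:
  assumes "length x = n" "0 < n" "b * n \<le> real k - 1" "b * n \<le> real n - real k - 1"
    and "adjacent_level x k"
  shows "b \<le> miss_prob x k"
proof -
  have "x \<noteq> []"
    using assms(1,2) by auto
  from assms(5) consider "ones x + 1 = k" | "ones x = k + 1"
    unfolding adjacent_level_def by blast
  then have "miss_prob x k = (real k - 1) / n \<or> miss_prob x k = (real n - real k - 1) / n"
  proof cases
    case 1
    then show ?thesis
      using assms(1) by (simp add: miss_prob_from_below[OF \<open>x \<noteq> []\<close>])
  next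
    case 2
    then show ?thesis
      using assms(1) ones_le_length[of x] by (simp add: miss_prob_from_above[OF \<open>x \<noteq> []\<close>] of_nat_diff)
  qed
  then show ?thesis
    using assms(2-4) by (auto simp: le_divide_eq)
qed

lemma pop_miss_prob_ge_power:
  assumes "\<forall>x\<in>set P. length x = n" "0 < n" "0 \<le> b"
    and "b * n \<le> real k - 1" "b * n \<le> real n - real k - 1"
  shows "b ^ num_neighbours P k \<le> pop_miss_prob P k"
  using assms(1)
proof (induction P)
  case Nil
  then show ?case by (simp add: num_neighbours_def pop_miss_prob_def)
next
  case (Cons x P)
  then have IH: "b ^ num_neighbours P k \<le> pop_miss_prob P k" and "x \<noteq> []"
    using assms(2) by auto
  show ?case
  proof (cases "adjacent_level x k")
    case True
    then have "b \<le> miss_prob x k"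
      using Cons.prems assms by (intro miss_prob_adjacent) auto
    then have "b * b ^ num_neighbours P k \<le> miss_prob x k * pop_miss_prob P k"
      using IH assms(3) by (intro mult_mono) (auto simp: miss_prob_def)
    with True show ?thesis
      by (simp add: num_neighbours_def pop_miss_prob_def)
  next
    case False
    with IH \<open>x \<noteq> []\<close> show ?thesis
      by (simp add: num_neighbours_def pop_miss_prob_def miss_prob_non_adjacent)
  qed
qed

lemma sum_num_neighbours_le:
  assumes "finite A"
  shows "(\<Sum>k\<in>A. num_neighbours P k) \<le> 2 * length P"
proof (induction P)
  case Nil
  then show ?case by (simp add: num_neighbours_def)
next
  case (Cons x P)
  have "(\<Sum>k\<in>A. of_bool (adjacent_level x k) :: nat) = card {k\<in>A. adjacent_level x k}"
    using assms by (simp add: Int_def)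
  also have "\<dots> \<le> card {ones x + 1, ones x - 1}"
    by (rule card_mono) (auto simp: adjacent_level_def)
  also have "\<dots> \<le> 2"
    by (simp add: card_insert_if)
  finally have "(\<Sum>k\<in>A. of_bool (adjacent_level x k) :: nat) \<le> 2" .
  moreover have "num_neighbours (x # P) k = of_bool (adjacent_level x k) + num_neighbours P k" for k
    by (simp add: num_neighbours_def)
  ultimately show ?case
    using Cons.IH by (simp add: sum.distrib)
qed

lemma card_crowded_levels_le:
  assumes "finite A"
  shows "card {k\<in>A. T < num_neighbours P k} * (T + 1) \<le> 2 * length P"
proof -
  let ?C = "{k\<in>A. T < num_neighbours P k}"
  have "card ?C * (T + 1) = (\<Sum>k\<in>?C. T + 1)"
    by simp
  also have "\<dots> \<le> (\<Sum>k\<in>?C. num_neighbours P k)"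
    by (rule sum_mono) auto
  also have "\<dots> \<le> (\<Sum>k\<in>A. num_neighbours P k)"
    using assms by (intro sum_mono2) auto
  also have "\<dots> \<le> 2 * length P"
    using assms by (rule sum_num_neighbours_le)
  finally show ?thesis .
qed

lemma card_nat_less_real_le:
  fixes c :: real
  assumes "0 \<le> c"
  shows "finite {k::nat. real k < c}" "real (card {k::nat. real k < c}) \<le> c + 1"
proof -
  have eq: "{k::nat. real k < c} = {..<nat \<lceil>c\<rceil>}"
    by (auto simp: zless_nat_eq_int_zless less_ceiling_iff)
  then show "finite {k::nat. real k < c}"
    by simp
  have "real (nat \<lceil>c\<rceil>) \<le> c + 1"
    using assms of_int_ceiling_le_add_one[of c] by simp
  then show "real (card {k::nat. real k < c}) \<le> c + 1"
    by (simp add: eq)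
qed

lemma card_levels_near_ends_le:
  fixes d :: real
  assumes "0 \<le> d"
  shows "real (card {k\<in>{0..n}. real k < d + 1 \<or> real n - real k < d + 1}) \<le> 2 * d + 4"
proof -
  let ?A = "{j::nat. real j < d + 1}"
  have "finite ?A" "real (card ?A) \<le> d + 2"
    using card_nat_less_real_le[of "d + 1"] assms by simp_all
  have "{k\<in>{0..n}. real k < d + 1 \<or> real n - real k < d + 1} \<subseteq> ?A \<union> (\<lambda>j. n - j) ` ?A"
  proof
    fix k
    assume k: "k \<in> {k\<in>{0..n}. real k < d + 1 \<or> real n - real k < d + 1}"
    show "k \<in> ?A \<union> (\<lambda>j. n - j) ` ?A"
    proof (cases "k \<in> ?A")
      case False
      with k have "n - k \<in> ?A" "k = n - (n - k)"
        by (auto simp: of_nat_diff)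
      then show ?thesis
        by blast
    qed simp
  qed
  then have "card {k\<in>{0..n}. real k < d + 1 \<or> real n - real k < d + 1} \<le> card (?A \<union> (\<lambda>j. n - j) ` ?A)"
    using \<open>finite ?A\<close> by (intro card_mono) auto
  also have "\<dots> \<le> card ?A + card ((\<lambda>j. n - j) ` ?A)"
    by (rule card_Un_le)
  also have "\<dots> \<le> 2 * card ?A"
    using card_image_le[OF \<open>finite ?A\<close>, of "\<lambda>j. n - j"] by simp
  finally show ?thesis
    using \<open>real (card ?A) \<le> d + 2\<close> by linarith
qed

section \<open>Many missing levels stay missing\<close>

lemma num_fvals_append_le:
  assumes "K \<subseteq> {0..n} - ones ` set P" "\<forall>x\<in>set (P @ Q). length x = n"
  shows "num_fvals n (P @ Q) + card {k\<in>K. k \<notin> ones ` set Q} \<le> n + 1"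
proof -
  let ?U = "{k\<in>K. k \<notin> ones ` set Q}"
  have "ones ` set (P @ Q) \<inter> ?U = {}" "ones ` set (P @ Q) \<union> ?U \<subseteq> {0..n}"
    using assms ones_le_length by fastforce+
  then have "card (ones ` set (P @ Q)) + card ?U = card (ones ` set (P @ Q) \<union> ?U)"
    by (intro card_Un_disjoint[symmetric]) (auto intro: finite_subset)
  also have "\<dots> \<le> card {0..n}"
    using \<open>ones ` set (P @ Q) \<union> ?U \<subseteq> {0..n}\<close> by (intro card_mono) auto
  finally have "card (ones ` set (P @ Q)) + card ?U \<le> n + 1"
    by simp
  then show ?thesis
    by (simp add: num_fvals_eq_card_ones)
qed

lemma eps_fifth_minus_bounds:
  fixes \<epsilon> :: real
  assumes "0 < \<epsilon>" "20 / \<epsilon> \<le> real n"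
  shows "0 < n" "\<epsilon> / 10 \<le> \<epsilon> / 5 - 2 / real n" "\<epsilon> / 5 - 2 / real n \<le> \<epsilon> / 5"
proof -
  have "0 < 20 / \<epsilon>"
    using assms(1) by simp
  then show "0 < n"
    using assms(2) by linarith
  then have "2 / real n \<le> \<epsilon> / 10"
    using assms by (simp add: field_simps)
  then show "\<epsilon> / 10 \<le> \<epsilon> / 5 - 2 / real n" "\<epsilon> / 5 - 2 / real n \<le> \<epsilon> / 5"
    by simp_all
qed

lemma card_missing_levels:
  assumes "\<forall>x\<in>set P. length x = n"
  shows "card ({0..n} - ones ` set P) + num_fvals n P = n + 1"
proof -
  have "ones ` set P \<subseteq> {0..n}"
    using assms ones_le_length by fastforce
  moreover from this have "card (ones ` set P) \<le> card {0..n}"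
    by (intro card_mono) auto
  ultimately show ?thesis
    by (simp add: num_fvals_eq_card_ones card_Diff_subset)
qed

lemma exists_rarely_hit_missing_levels:
  fixes \<epsilon> :: real
  assumes "0 < \<epsilon>" "\<epsilon> < 1" "20 / \<epsilon> \<le> real n" "4 \<le> \<epsilon> * (real T + 1)"
    and "length P = n + 1" "\<forall>x\<in>set P. length x = n"
    and "real (num_fvals n P) \<le> (1 - \<epsilon>) * real (n + 1)"
  obtains K where "K \<subseteq> {0..n} - ones ` set P" "\<epsilon> * real (n + 1) / 10 \<le> real (card K)"
    and "\<And>k. k \<in> K \<Longrightarrow> (\<epsilon> / 5 - 2 / real n) ^ T \<le> pop_miss_prob P k"
proof -
  define b where "b = \<epsilon> / 5 - 2 / real n"
  have "0 < n"
    using assms(1,3) by (rule eps_fifth_minus_bounds)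
  then have bn: "b * n = \<epsilon> * n / 5 - 2"
    by (simp add: b_def field_simps)
  have b: "0 < b" "b < 1"
    using eps_fifth_minus_bounds[OF assms(1,3)] assms(1,2) unfolding b_def by linarith+
  define M where "M = {0..n} - ones ` set P"
  define E where "E = {k\<in>{0..n}. real k < b * n + 1 \<or> real n - real k < b * n + 1}"
  define C where "C = {k\<in>{0..n}. T < num_neighbours P k}"
  have "real (card M) + real (num_fvals n P) = real (n + 1)"
    using card_missing_levels[OF assms(6)] unfolding M_def by (metis of_nat_add)
  then have card_M: "\<epsilon> * real (n + 1) \<le> real (card M)"
    using assms(7) by (simp add: algebra_simps)
  have card_E: "real (card E) \<le> 2 * (b * n) + 4"
    unfolding E_def using b(1) by (intro card_levels_near_ends_le) simp
  have "real (card C * (T + 1)) \<le> real (2 * (n + 1))"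
    using card_crowded_levels_le[of "{0..n}" T P] assms(5) unfolding C_def by (intro of_nat_mono) simp
  then have C_T: "real (card C) * (real T + 1) \<le> 2 * real (n + 1)"
    by (simp add: algebra_simps)
  have "real (card C) * 4 \<le> real (card C) * (\<epsilon> * (real T + 1))"
    by (rule mult_left_mono[OF assms(4)]) simp
  also have "\<dots> = \<epsilon> * (real (card C) * (real T + 1))"
    by simp
  also have "\<dots> \<le> \<epsilon> * (2 * real (n + 1))"
    using C_T assms(1) by (intro mult_left_mono) auto
  finally have card_C: "real (card C) \<le> \<epsilon> * real (n + 1) / 2"
    by (simp add: algebra_simps)
  show ?thesis
  proof
    show "M - E - C \<subseteq> {0..n} - ones ` set P"
      by (auto simp: M_def)
    have "card M \<le> card ((M - E - C) \<union> E \<union> C)"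
      by (intro card_mono) (auto simp: M_def E_def C_def)
    also have "\<dots> \<le> card (M - E - C) + card E + card C"
      by (meson card_Un_le add_right_mono order_trans)
    finally have "real (card M) \<le> real (card (M - E - C)) + real (card E) + real (card C)"
      by linarith
    moreover have "\<epsilon> * n \<le> \<epsilon> * real (n + 1)"
      using assms(1) by simp
    ultimately show "\<epsilon> * real (n + 1) / 10 \<le> real (card (M - E - C))"
      using card_M card_E card_C bn by linarith
  next
    fix k
    assume "k \<in> M - E - C"
    then have k: "b * n \<le> real k - 1" "b * n \<le> real n - real k - 1" "num_neighbours P k \<le> T"
      by (auto simp: M_def E_def C_def)
    have "b ^ T \<le> b ^ num_neighbours P k"
      using k(3) b by (intro power_decreasing) auto
    also have "\<dots> \<le> pop_miss_prob P k"
      using assms(6) \<open>0 < n\<close> b k by (intro pop_miss_prob_ge_power) auto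
    finally show "(\<epsilon> / 5 - 2 / real n) ^ T \<le> pop_miss_prob P k"
      by (simp add: b_def)
  qed
qed

lemma missed_threshold_exponent_le:
  fixes \<epsilon> b :: real
  assumes "0 < \<epsilon>" "\<epsilon> \<le> 1/2" "\<epsilon> / 10 \<le> b" "b \<le> \<epsilon> / 5" "real T + 1 \<le> 5 / \<epsilon>"
    and "\<epsilon> * real (n + 1) / 10 \<le> \<kappa>"
  shows "\<epsilon> / 10 * b powr (5 / \<epsilon>) * real (n + 1) - \<kappa> * b ^ T / 2
    \<le> - (\<epsilon> * (\<epsilon> / 10) ^ T / 40) * real n"
proof -
  define B where "B = b ^ T * real (n + 1)"
  have "0 < b" "0 \<le> \<epsilon> * B"
    using assms(1,3) by (auto simp: B_def)
  have "b powr (5 / \<epsilon>) \<le> b powr real (T + 1)"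
    using assms by (intro powr_mono') auto
  also have "\<dots> = b * b ^ T"
    using \<open>0 < b\<close> by (subst powr_realpow) auto
  also have "\<dots> \<le> \<epsilon> / 5 * b ^ T"
    using assms(4) \<open>0 < b\<close> by (intro mult_right_mono) auto
  finally have "\<epsilon> / 10 * b powr (5 / \<epsilon>) * real (n + 1) \<le> \<epsilon> / 10 * (\<epsilon> / 5 * b ^ T) * real (n + 1)"
    using assms(1) by (intro mult_right_mono mult_left_mono) auto
  also have "\<dots> = \<epsilon> * B * \<epsilon> / 50"
    by (simp add: B_def algebra_simps)
  also have "\<dots> \<le> \<epsilon> * B * (1 / 2) / 50"
    using assms(2) \<open>0 \<le> \<epsilon> * B\<close> by (intro divide_right_mono mult_left_mono) auto
  finally have t_le: "\<epsilon> / 10 * b powr (5 / \<epsilon>) * real (n + 1) \<le> \<epsilon> * B / 100"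
    by simp
  have \<kappa>_ge: "\<epsilon> * B / 10 \<le> \<kappa> * b ^ T"
    using mult_right_mono[OF assms(6), of "b ^ T"] \<open>0 < b\<close> by (simp add: B_def field_simps)
  have "\<epsilon> * ((\<epsilon> / 10) ^ T * real n) \<le> \<epsilon> * B"
    using assms(1,3) \<open>0 < b\<close> unfolding B_def
    by (intro mult_left_mono mult_mono power_mono) auto
  then have "\<epsilon> / 10 * b powr (5 / \<epsilon>) * real (n + 1) - \<kappa> * b ^ T / 2
      \<le> - (\<epsilon> * ((\<epsilon> / 10) ^ T * real n)) / 40"
    using t_le \<kappa>_ge \<open>0 \<le> \<epsilon> * B\<close> by linarith
  then show ?thesis
    by simp
qed

lemma nat_ceiling_four_div_bounds:
  fixes \<epsilon> :: real
  assumes "0 < \<epsilon>" "\<epsilon> \<le> 1/2"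
  shows "4 \<le> \<epsilon> * (real (nat \<lceil>4 / \<epsilon>\<rceil>) + 1)" "real (nat \<lceil>4 / \<epsilon>\<rceil>) + 1 \<le> 5 / \<epsilon>"
proof -
  define T where "T = real (nat \<lceil>4 / \<epsilon>\<rceil>)"
  have "4 / \<epsilon> \<le> T" "T \<le> 4 / \<epsilon> + 1"
    using assms(1) le_of_int_ceiling[of "4 / \<epsilon>"] of_int_ceiling_le_add_one[of "4 / \<epsilon>"]
    by (simp_all add: T_def)
  have "4 \<le> \<epsilon> * T"
    using mult_left_mono[OF \<open>4 / \<epsilon> \<le> T\<close>, of \<epsilon>] assms(1) by simp
  then show "4 \<le> \<epsilon> * (T + 1)"
    using assms(1) by (simp add: algebra_simps)
  have "2 \<le> 1 / \<epsilon>" "5 / \<epsilon> = 4 / \<epsilon> + 1 / \<epsilon>"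
    using assms by (simp_all add: field_simps)
  then show "T + 1 \<le> 5 / \<epsilon>"
    using \<open>T \<le> 4 / \<epsilon> + 1\<close> by linarith
qed

lemma prob_few_fvals_with_offspring:
  fixes \<epsilon> :: real
  assumes "0 < \<epsilon>" "\<epsilon> < 1/2" "T = nat \<lceil>4 / \<epsilon>\<rceil>" "20 / \<epsilon> \<le> real n"
    and "length P = n + 1" "\<forall>x\<in>set P. length x = n"
    and "real (num_fvals n P) \<le> (1 - \<epsilon>) * real (n + 1)"
  shows "1 - exp (- (\<epsilon> * (\<epsilon> / 10) ^ T / 40) * real n)
    \<le> measure_pmf.prob (offspring P)
        {Q. real (num_fvals n (P @ Q)) \<le> (1 - \<epsilon> / 10 * (\<epsilon> / 5 - 2 / real n) powr (5 / \<epsilon>)) * real (n + 1)}"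
proof -
  define b where "b = \<epsilon> / 5 - 2 / real n"
  define t where "t = \<epsilon> / 10 * b powr (5 / \<epsilon>) * real (n + 1)"
  define Bad where "Bad = {Q. \<not> real (num_fvals n (P @ Q)) \<le> real (n + 1) - t}"
  have "0 < n" and b: "\<epsilon> / 10 \<le> b" "b \<le> \<epsilon> / 5"
    using eps_fifth_minus_bounds[OF assms(1,4)] by (simp_all add: b_def)
  have T: "4 \<le> \<epsilon> * (real T + 1)" "real T + 1 \<le> 5 / \<epsilon>"
    using nat_ceiling_four_div_bounds assms(1-3) by simp_all
  obtain K where K: "K \<subseteq> {0..n} - ones ` set P" "\<epsilon> * real (n + 1) / 10 \<le> real (card K)"
    and hit: "\<And>k. k \<in> K \<Longrightarrow> b ^ T \<le> pop_miss_prob P k"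
    using exists_rarely_hit_missing_levels[OF assms(1) _ assms(4) T(1) assms(5-7)] assms(2)
    unfolding b_def by auto
  \<comment> \<open>Outside the support of the offspring distribution the lengths are arbitrary.\<close>
  have "Bad \<inter> set_pmf (offspring P) \<subseteq> {Q. real (card {k\<in>K. k \<notin> ones ` set Q}) \<le> t}"
  proof clarify
    fix Q
    assume "Q \<in> Bad" "Q \<in> set_pmf (offspring P)"
    then have "num_fvals n (P @ Q) + card {k\<in>K. k \<notin> ones ` set Q} \<le> n + 1"
      using assms(6) length_offspring[OF _ assms(6) \<open>0 < n\<close>]
      by (intro num_fvals_append_le[OF K(1)]) auto
    then have "real (num_fvals n (P @ Q)) + real (card {k\<in>K. k \<notin> ones ` set Q}) \<le> real (n + 1)"
      by (simp only: of_nat_add[symmetric] of_nat_le_iff)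
    with \<open>Q \<in> Bad\<close> show "real (card {k\<in>K. k \<notin> ones ` set Q}) \<le> t"
      unfolding Bad_def mem_Collect_eq by linarith
  qed
  then have "measure_pmf.prob (offspring P) Bad
      \<le> measure_pmf.prob (offspring P) {Q. real (card {k\<in>K. k \<notin> ones ` set Q}) \<le> t}"
    by (subst measure_Int_set_pmf[symmetric]) (rule measure_pmf.finite_measure_mono, auto)
  also have "\<dots> \<le> exp (t - real (card K) * b ^ T / 2)"
    using K(1) hit by (intro prob_offspring_few_missed_le) (auto intro: finite_subset)
  also have "\<dots> \<le> exp (- (\<epsilon> * (\<epsilon> / 10) ^ T / 40) * real n)"
    using missed_threshold_exponent_le[OF assms(1) _ b T(2) K(2)] assms(2) unfolding t_def by simp
  finally have "1 - exp (- (\<epsilon> * (\<epsilon> / 10) ^ T / 40) * real n) \<le> measure_pmf.prob (offspring P) (UNIV - Bad)"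
    using measure_pmf.prob_compl[of Bad "offspring P"] by simp
  also have "UNIV - Bad = {Q. real (num_fvals n (P @ Q))
      \<le> (1 - \<epsilon> / 10 * (\<epsilon> / 5 - 2 / real n) powr (5 / \<epsilon>)) * real (n + 1)}"
    by (auto simp: Bad_def t_def b_def algebra_simps)
  finally show ?thesis .
qed

theorem lemma10:
  shows "\<exists>\<epsilon>\<^sub>0::real. 0 < \<epsilon>\<^sub>0 \<and> \<epsilon>\<^sub>0 < 1 \<and>
    (\<forall>\<epsilon>::real. 0 < \<epsilon> \<and> \<epsilon> < \<epsilon>\<^sub>0 \<longrightarrow>
      (\<exists>c::real. c > 0 \<and> (\<exists>n\<^sub>0::nat. \<forall>n \<ge> n\<^sub>0. \<forall>P :: bool list list.
         length P = n + 1 \<longrightarrow> (\<forall>x \<in> set P. length x = n) \<longrightarrow>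
         real (num_fvals n P) \<le> (1 - \<epsilon>) * real (n + 1) \<longrightarrow>
         measure_pmf.prob (offspring P)
           {Q. real (num_fvals n (P @ Q))
                 \<le> (1 - \<epsilon> / 10 * (\<epsilon> / 5 - 2 / real n) powr (5 / \<epsilon>)) * real (n + 1)}
           \<ge> 1 - exp (- c * real n))))"
  apply (rule exI[of _ "1/2"])
  apply (intro conjI allI impI)
    apply simp
   apply simp
  subgoal for \<epsilon>
    by (intro exI[of _ "\<epsilon> * (\<epsilon> / 10) ^ nat \<lceil>4 / \<epsilon>\<rceil> / 40"] exI[of _ "nat \<lceil>20 / \<epsilon>\<rceil>"]
        conjI allI impI prob_few_fvals_with_offspring) auto
  done

end
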